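(* Let $I_1,\dots,I_m,I$ be pairwise different nonempty subsets of $\{1,\dots,n\}$, let $\mathcal{A}'=\{H_{I_1},\dots,H_{I_m}\}$ and let $\mathcal{A}''_I=\{H\cap H_I: H\in\mathcal{A}'\}$ (the restriction of $\mathcal{A}'\cup\{H_I\}$ to $H_I$). Then $|\mathcal{A}'|-|\mathcal{A}''_I|$ equals the number of circuit-triples $\{I,A,B\}$ with $A,B\in\{I_1,\dots,I_m\}$.
   Context: $H_J=\ker\big(\sum_{j\in J}x_j\big)\subseteq\mathbb{Q}^n$ for $J\subseteq\{1,\dots,n\}$. A circuit-triple is a set $\{A_1,A_2,A_3\}$ of three pairwise different nonempty subsets such that one of them is the disjoint union of the other two (equivalently, their three linear forms $\sum_{i\in A_j}x_i$ span a $2$-dimensional space). *)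

theory Defs
  imports "HOL-Analysis.Analysis"
begin

text \<open>Coordinates of Q^n are indexed by a finite type 'n (playing the role of {1..n}).
  hyp J is the kernel of the linear form sum_{j in J} x_j.\<close>
definition hyp :: "'n::finite set \<Rightarrow> (rat ^ 'n) set" where
  "hyp J = {x. (\<Sum>j\<in>J. x $ j) = 0}"

definition circuit_triple :: "'n set set \<Rightarrow> bool" where
  "circuit_triple T \<longleftrightarrow> card T = 3 \<and> (\<forall>A\<in>T. A \<noteq> {}) \<and>
     (\<exists>A B C. T = {A, B, C} \<and> A \<inter> B = {} \<and> C = A \<union> B)"

end

theory Submission
  imports Defs
begin

text \<open>Testing the inclusion \<open>H\<^sub>I \<inter> H\<^sub>A \<subseteq> H\<^sub>B\<close> against the vectors \<open>e\<^sub>p\<close>, \<open>e\<^sub>p - e\<^sub>q\<close> and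
  \<open>e\<^sub>p + e\<^sub>q - e\<^sub>r\<close> shows that, for \<open>B \<notin> {I, A}\<close>, it holds iff \<open>I\<close> and \<open>A\<close> are nested or
  disjoint and \<open>B = I \<triangle> A\<close>, i.e. iff \<open>{I, A, B}\<close> is a circuit-triple; conversely such a \<open>B\<close>
  satisfies \<open>H\<^sub>A \<inter> H\<^sub>I = H\<^sub>B \<inter> H\<^sub>I\<close>. So every fibre of the restriction map
  \<open>A \<mapsto> H\<^sub>A \<inter> H\<^sub>I\<close> on the \<open>I\<^sub>j\<close> has one or two elements, the two-element fibres are
  exactly the circuit-triples through \<open>I\<close>, and the loss of elements under the map counts them.\<close>

definition nested_or_disjoint :: "'a set \<Rightarrow> 'a set \<Rightarrow> bool" where
  "nested_or_disjoint X Y \<longleftrightarrow> X \<inter> Y = {} \<or> X \<subseteq> Y \<or> Y \<subseteq> X"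

lemma sum_sym_diff:
  fixes f :: "'a \<Rightarrow> 'b::comm_ring_1"
  assumes "finite X" "finite Y"
  shows "sum f (sym_diff X Y) = sum f X + sum f Y - 2 * sum f (X \<inter> Y)"
proof -
  have "sum f ((X \<union> Y) - (X \<inter> Y)) = sum f (X \<union> Y) - sum f (X \<inter> Y)"
    using assms by (intro sum_diff) auto
  moreover have "(X \<union> Y) - (X \<inter> Y) = sym_diff X Y" by blast
  ultimately show ?thesis using assms by (simp add: sum_Un)
qed

lemma disjoint_union_imp_sym_diff:
  assumes "X \<inter> Y = {}" "Z = X \<union> Y"
    and "U \<in> {X, Y, Z}" "V \<in> {X, Y, Z}" "W \<in> {X, Y, Z}" "U \<noteq> V" "V \<noteq> W" "U \<noteq> W"
  shows "nested_or_disjoint U V \<and> W = sym_diff U V"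
  using assms unfolding nested_or_disjoint_def by auto

lemma venn_atoms_union_cases:
  assumes "nested_or_disjoint I A" "B \<subseteq> I \<union> A" "I \<inter> A \<subseteq> B \<or> I \<inter> A \<inter> B = {}"
    "I - A \<subseteq> B \<or> (I - A) \<inter> B = {}" "A - I \<subseteq> B \<or> (A - I) \<inter> B = {}"
  shows "B = {} \<or> B = I \<or> B = A \<or> B = sym_diff I A"
proof -
  obtain X Y Z where B: "B = X \<union> Y \<union> Z"
    and XYZ: "X = {} \<or> X = I \<inter> A" "Y = {} \<or> Y = I - A" "Z = {} \<or> Z = A - I"
  proof
    show "B = (B \<inter> (I \<inter> A)) \<union> (B \<inter> (I - A)) \<union> (B \<inter> (A - I))"
      using assms(2) by blast
  qed (use assms(3-5) in blast)+
  show ?thesis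
    using assms(1) XYZ unfolding B nested_or_disjoint_def by (elim disjE) auto
qed

lemma card_eq_card_image_add_card_collapsed_pairs:
  assumes "finite S" and fibre_le_2: "\<And>y. card {x \<in> S. f x = y} \<le> 2"
  shows "card S = card (f ` S) + card {P. P \<subseteq> S \<and> card P = 2 \<and> (\<forall>x\<in>P. \<forall>x'\<in>P. f x = f x')}"
proof -
  define fibre where "fibre y = {x \<in> S. f x = y}" for y
  have fin: "finite (fibre y)" for y
    using \<open>finite S\<close> by (simp add: fibre_def)
  have "card S = (\<Sum>y\<in>f ` S. card (fibre y))"
    unfolding fibre_def using sum.image_gen[OF \<open>finite S\<close>, of "\<lambda>_. 1::nat" f] by simp
  also have "\<dots> = (\<Sum>y\<in>f ` S. 1 + (card (fibre y) choose 2))"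
  proof (rule sum.cong)
    fix y assume "y \<in> f ` S"
    then have "fibre y \<noteq> {}" by (auto simp: fibre_def)
    then have "1 \<le> card (fibre y)" using fin by (simp add: Suc_le_eq card_gt_0_iff)
    moreover have "card (fibre y) \<le> 2" using fibre_le_2 by (simp add: fibre_def)
    ultimately show "card (fibre y) = 1 + (card (fibre y) choose 2)"
      by (auto simp: le_Suc_eq numeral_2_eq_2)
  qed simp
  also have "\<dots> = card (f ` S) + (\<Sum>y\<in>f ` S. card {P. P \<subseteq> fibre y \<and> card P = 2})"
    using fin by (simp add: n_subsets sum_Suc)
  also have "(\<Sum>y\<in>f ` S. card {P. P \<subseteq> fibre y \<and> card P = 2})
      = card (\<Union>y\<in>f ` S. {P. P \<subseteq> fibre y \<and> card P = 2})"
    using \<open>finite S\<close> fin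
    by (intro card_UN_disjoint[symmetric]) (auto simp: fibre_def card_2_iff)
  also have "(\<Union>y\<in>f ` S. {P. P \<subseteq> fibre y \<and> card P = 2})
      = {P. P \<subseteq> S \<and> card P = 2 \<and> (\<forall>x\<in>P. \<forall>x'\<in>P. f x = f x')}"
    by (auto simp: fibre_def card_2_iff)
  finally show ?thesis .
qed

lemma circuit_triple_iff:
  assumes "I \<noteq> {}" "A \<noteq> {}" "B \<noteq> {}" "I \<noteq> A" "B \<noteq> I" "B \<noteq> A"
  shows "circuit_triple {I, A, B} \<longleftrightarrow> nested_or_disjoint I A \<and> B = sym_diff I A"
proof
  assume "circuit_triple {I, A, B}"
  then obtain X Y Z where XYZ: "{I, A, B} = {X, Y, Z}" "X \<inter> Y = {}" "Z = X \<union> Y"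
    unfolding circuit_triple_def by (elim conjE exE) (rule that)
  have "I \<in> {X, Y, Z}" "A \<in> {X, Y, Z}" "B \<in> {X, Y, Z}"
    unfolding XYZ(1)[symmetric] by simp_all
  with XYZ(2,3) show "nested_or_disjoint I A \<and> B = sym_diff I A"
    by (rule disjoint_union_imp_sym_diff) (use assms in auto)
next
  assume "nested_or_disjoint I A \<and> B = sym_diff I A"
  then have "\<exists>X Y Z. {I, A, B} = {X, Y, Z} \<and> X \<inter> Y = {} \<and> Z = X \<union> Y"
    unfolding nested_or_disjoint_def
  proof (elim conjE disjE)
    assume "I \<inter> A = {}" "B = sym_diff I A"
    then have "B = I \<union> A" by blast
    with \<open>I \<inter> A = {}\<close> show ?thesis by blast
  next
    assume "I \<subseteq> A" "B = sym_diff I A"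
    then have "I \<inter> B = {}" "A = I \<union> B" by blast+
    moreover have "{I, A, B} = {I, B, A}" by (simp add: insert_commute)
    ultimately show ?thesis by blast
  next
    assume "A \<subseteq> I" "B = sym_diff I A"
    then have "A \<inter> B = {}" "I = A \<union> B" by blast+
    moreover have "{I, A, B} = {A, B, I}" by (simp add: insert_commute)
    ultimately show ?thesis by blast
  qed
  then show "circuit_triple {I, A, B}"
    using assms by (simp add: circuit_triple_def)
qed

lemma sum_axis_one: "(\<Sum>j\<in>J. axis p (1::'a::comm_ring_1) $ j) = of_bool (p \<in> J)"
  by (simp add: axis_def)

lemma axis_in_hyp: "axis p 1 \<in> hyp J \<longleftrightarrow> p \<notin> J"
  by (simp add: hyp_def sum_axis_one)

lemma axis_diff_in_hyp: "axis p 1 - axis q 1 \<in> hyp J \<longleftrightarrow> (p \<in> J \<longleftrightarrow> q \<in> J)"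
  by (auto simp: hyp_def sum_subtractf sum_axis_one)

lemma axis_add_diff_in_hyp:
  "axis p 1 + axis q 1 - axis r 1 \<in> hyp J \<longleftrightarrow> of_bool (r \<in> J) = of_bool (p \<in> J) + (of_bool (q \<in> J) :: rat)"
  by (simp add: hyp_def sum.distrib sum_subtractf sum_axis_one)

lemma hyp_inter_hyp_sym_diff:
  fixes I A :: "'n::finite set"
  assumes "nested_or_disjoint I A"
  shows "hyp A \<inter> hyp I = hyp (sym_diff I A) \<inter> hyp I"
proof -
  have "(\<Sum>j\<in>A. x $ j) = 0 \<longleftrightarrow> (\<Sum>j\<in>sym_diff I A. x $ j) = 0"
    if I: "(\<Sum>j\<in>I. x $ j) = 0" for x :: "rat ^ 'n"
  proof -
    have "(\<Sum>j\<in>sym_diff I A. x $ j) = (\<Sum>j\<in>A. x $ j) - 2 * (\<Sum>j\<in>I \<inter> A. x $ j)"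
      using sum_sym_diff[of I A "($) x"] I by simp
    moreover have "I \<inter> A = {} \<or> I \<inter> A = I \<or> I \<inter> A = A"
      using assms unfolding nested_or_disjoint_def by blast
    ultimately show ?thesis
      using I by (elim disjE) simp_all
  qed
  then show ?thesis
    unfolding hyp_def by blast
qed

lemma hyp_inter_subset_imp_sym_diff:
  fixes I A B :: "'n::finite set"
  assumes sub: "hyp I \<inter> hyp A \<subseteq> hyp B" and B: "B \<notin> {{}, I, A}"
  shows "nested_or_disjoint I A \<and> B = sym_diff I A"
proof -
  have same: "p \<in> B \<longleftrightarrow> q \<in> B" if "p \<in> I \<longleftrightarrow> q \<in> I" "p \<in> A \<longleftrightarrow> q \<in> A" for p q
  proof -
    have "axis p 1 - axis q 1 \<in> hyp I \<inter> hyp A"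
      using that by (simp add: axis_diff_in_hyp)
    with sub have "axis p 1 - axis q 1 \<in> hyp B" by blast
    then show ?thesis by (simp add: axis_diff_in_hyp)
  qed
  have outside: "p \<notin> B" if "p \<notin> I \<union> A" for p
  proof -
    have "axis p 1 \<in> hyp I \<inter> hyp A"
      using that by (simp add: axis_in_hyp)
    with sub have "axis p 1 \<in> hyp B" by blast
    then show ?thesis by (simp add: axis_in_hyp)
  qed
  have atoms: "I \<inter> A \<subseteq> B \<or> I \<inter> A \<inter> B = {}" "I - A \<subseteq> B \<or> (I - A) \<inter> B = {}"
    "A - I \<subseteq> B \<or> (A - I) \<inter> B = {}"
    using same by blast+
  have "B \<subseteq> I \<union> A"
    using outside by blast
  have nested: "nested_or_disjoint I A"
  proof (rule ccontr)
    assume "\<not> nested_or_disjoint I A"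
    then obtain p q r where pqr: "p \<in> I - A" "q \<in> A - I" "r \<in> I \<inter> A"
      unfolding nested_or_disjoint_def by blast
    then have "axis p 1 + axis q 1 - axis r 1 \<in> hyp I \<inter> hyp A"
      by (simp add: axis_add_diff_in_hyp)
    with sub have "axis p 1 + axis q 1 - axis r 1 \<in> hyp B" by blast
    then have "(r \<in> B \<longleftrightarrow> p \<in> B \<or> q \<in> B) \<and> \<not> (p \<in> B \<and> q \<in> B)"
      by (auto simp: axis_add_diff_in_hyp of_bool_def split: if_splits)
    then have "B \<in> {{}, I, A}"
      using pqr atoms \<open>B \<subseteq> I \<union> A\<close> by (elim conjE disjE) blast+
    with B show False ..
  qed
  have "B = {} \<or> B = I \<or> B = A \<or> B = sym_diff I A"
    using nested \<open>B \<subseteq> I \<union> A\<close> atoms by (rule venn_atoms_union_cases)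
  with B nested show ?thesis by simp
qed

lemma inj_on_hyp: "inj_on hyp {J :: 'n::finite set. J \<noteq> {}}"
proof (rule inj_onI)
  fix A B :: "'n set"
  assume "A \<in> {J. J \<noteq> {}}" "B \<in> {J. J \<noteq> {}}" and eq: "hyp A = hyp B"
  then have "B \<noteq> {}" by simp
  moreover have "hyp A \<inter> hyp A \<subseteq> hyp B" using eq by simp
  ultimately show "A = B"
    using hyp_inter_subset_imp_sym_diff[of A A B] by simp blast
qed

lemma restrictions_eq_iff_circuit_triple:
  fixes I A B :: "'n::finite set"
  assumes "I \<noteq> {}" "A \<noteq> {}" "B \<noteq> {}" "I \<noteq> A" "B \<noteq> I" "B \<noteq> A"
  shows "hyp A \<inter> hyp I = hyp B \<inter> hyp I \<longleftrightarrow> circuit_triple {I, A, B}"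
proof
  assume "hyp A \<inter> hyp I = hyp B \<inter> hyp I"
  then have "hyp I \<inter> hyp A \<subseteq> hyp B" by blast
  then show "circuit_triple {I, A, B}"
    using assms by (simp add: hyp_inter_subset_imp_sym_diff circuit_triple_iff)
next
  assume "circuit_triple {I, A, B}"
  then show "hyp A \<inter> hyp I = hyp B \<inter> hyp I"
    using assms by (simp add: circuit_triple_iff hyp_inter_hyp_sym_diff)
qed

lemma card_restriction_fibre_le_2:
  fixes F :: "'n::finite set set"
  assumes "{} \<notin> F" "I \<noteq> {}" "I \<notin> F"
  shows "card {A \<in> F. hyp A \<inter> hyp I = V} \<le> 2"
proof (cases "\<exists>A\<in>F. hyp A \<inter> hyp I = V")
  case True
  then obtain A where A: "A \<in> F" "hyp A \<inter> hyp I = V" by blast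
  have "B \<in> {A, sym_diff I A}" if B: "B \<in> F" "hyp B \<inter> hyp I = V" for B
  proof (cases "B = A")
    case False
    have ne: "A \<noteq> {}" "B \<noteq> {}" "I \<noteq> A" "B \<noteq> I"
      using assms A B by auto
    have "circuit_triple {I, A, B}"
      using restrictions_eq_iff_circuit_triple[OF assms(2) ne False] A B by simp
    then show ?thesis
      using circuit_triple_iff[OF assms(2) ne False] by simp
  qed simp
  then have "card {B \<in> F. hyp B \<inter> hyp I = V} \<le> card {A, sym_diff I A}"
    by (intro card_mono) auto
  also have "\<dots> \<le> 2" by (simp add: card_insert_le_m1)
  finally show ?thesis .
next
  case False
  then have "{A \<in> F. hyp A \<inter> hyp I = V} = {}" by blast
  then show ?thesis by (metis card.empty zero_le)
qed

lemma circuit_triples_containing_eq: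
  fixes F :: "'n::finite set set"
  assumes "{} \<notin> F" "I \<noteq> {}" "I \<notin> F"
  shows "{T. circuit_triple T \<and> I \<in> T \<and> T - {I} \<subseteq> F}
    = insert I ` {P. P \<subseteq> F \<and> card P = 2 \<and> (\<forall>A\<in>P. \<forall>B\<in>P. hyp A \<inter> hyp I = hyp B \<inter> hyp I)}"
    (is "?T = insert I ` ?P")
proof
  show "?T \<subseteq> insert I ` ?P"
  proof
    fix T assume "T \<in> ?T"
    then have circuit: "circuit_triple T" and "I \<in> T" and "T - {I} \<subseteq> F" by auto
    then have "card (T - {I}) = 2" by (simp add: circuit_triple_def)
    then obtain A B where AB: "T - {I} = {A, B}" "A \<noteq> B" by (meson card_2_iff)
    with \<open>I \<in> T\<close> have T: "T = insert I {A, B}" by blast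
    have F: "A \<in> F" "B \<in> F" using \<open>T - {I} \<subseteq> F\<close> AB by auto
    then have ne: "A \<noteq> {}" "B \<noteq> {}" "I \<noteq> A" "B \<noteq> I" using assms by auto
    have "hyp A \<inter> hyp I = hyp B \<inter> hyp I"
      using restrictions_eq_iff_circuit_triple[OF assms(2) ne AB(2)[symmetric]] circuit T by simp
    moreover have "card {A, B} = 2" using AB(2) by simp
    ultimately have "{A, B} \<in> ?P" using F by blast
    with T show "T \<in> insert I ` ?P" by blast
  qed
next
  show "insert I ` ?P \<subseteq> ?T"
  proof
    fix T assume "T \<in> insert I ` ?P"
    then obtain P where P: "P \<in> ?P" and T: "T = insert I P" by blast
    then have "card P = 2" by simp
    then obtain A B where AB: "P = {A, B}" "A \<noteq> B" by (meson card_2_iff)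
    have F: "A \<in> F" "B \<in> F" and eq: "hyp A \<inter> hyp I = hyp B \<inter> hyp I"
      using P AB by blast+
    then have ne: "A \<noteq> {}" "B \<noteq> {}" "I \<noteq> A" "B \<noteq> I" using assms by auto
    have "circuit_triple {I, A, B}"
      using restrictions_eq_iff_circuit_triple[OF assms(2) ne AB(2)[symmetric]] eq by simp
    moreover have "insert I P - {I} \<subseteq> F" using AB F by blast
    ultimately show "T \<in> ?T" using T AB by simp
  qed
qed

theorem lemma2p9:
  fixes F :: "'n::finite set set" and I :: "'n set"
  assumes "{} \<notin> F" and "I \<noteq> {}" and "I \<notin> F"
  shows "int (card (hyp ` F)) - int (card ((\<lambda>H. H \<inter> hyp I) ` (hyp ` F)))
         = int (card {T. circuit_triple T \<and> I \<in> T \<and> T - {I} \<subseteq> F})"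
proof -
  let ?\<phi> = "\<lambda>A. hyp A \<inter> hyp I"
  let ?P = "{P. P \<subseteq> F \<and> card P = 2 \<and> (\<forall>A\<in>P. \<forall>B\<in>P. ?\<phi> A = ?\<phi> B)}"
  have "card (hyp ` F) = card F"
    using assms(1) by (intro card_image inj_on_subset[OF inj_on_hyp]) auto
  moreover have "(\<lambda>H. H \<inter> hyp I) ` (hyp ` F) = ?\<phi> ` F"
    by (simp add: image_image)
  moreover have "card F = card (?\<phi> ` F) + card ?P"
    using card_restriction_fibre_le_2[OF assms]
    by (intro card_eq_card_image_add_card_collapsed_pairs) auto
  moreover have "card {T. circuit_triple T \<and> I \<in> T \<and> T - {I} \<subseteq> F} = card ?P"
    unfolding circuit_triples_containing_eq[OF assms]
    using assms(3) by (intro card_image) (auto simp: inj_on_def)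
  ultimately show ?thesis by simp
qed

end
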